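(* Let $H$ be a graph. Then there exists a local metric basis of $K_1+H$ containing the vertex of $K_1$ if and only if $H\in\mathcal{G}$.
   Context: All graphs are finite and simple with at least one vertex. $K_1+H$ is the join: a new vertex joined by edges to every vertex of $H$. $d_G$ is shortest-path distance ($+\infty$ between components), $d_{G,2}=\min\{d_G,2\}$; $s$ distinguishes $x,y$ w.r.t. $d$ if $d(s,x)\ne d(s,y)$. A local metric basis of a connected graph $G$ is a minimum-size set $S\subseteq V(G)$ such that any two adjacent vertices are distinguished w.r.t. $d_G$ by some vertex of $S$. A local adjacency basis of $H$ is a minimum-size set $S\subseteq V(H)$ such that any two adjacent vertices are distinguished w.r.t. $d_{H,2}$ by some vertex of $S$. $\mathcal{G}$: class of graphs $H$ such that every local adjacency basis $B$ of $H$ satisfies $B\subseteq N_H(v)$ for some $v\in V(H)$. *)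

theory Defs
  imports Main "HOL-Library.Extended_Nat"
begin

definition graph :: "'a set \<Rightarrow> ('a \<Rightarrow> 'a \<Rightarrow> bool) \<Rightarrow> bool" where
  "graph V E \<longleftrightarrow> finite V \<and> V \<noteq> {} \<and>
     (\<forall>x y. E x y \<longrightarrow> x \<in> V \<and> y \<in> V) \<and>
     (\<forall>x y. E x y \<longrightarrow> E y x) \<and> (\<forall>x. \<not> E x x)"

fun walk :: "('a \<Rightarrow> 'a \<Rightarrow> bool) \<Rightarrow> nat \<Rightarrow> 'a \<Rightarrow> 'a \<Rightarrow> bool" where
  "walk E 0 x y \<longleftrightarrow> x = y"
| "walk E (Suc n) x y \<longleftrightarrow> (\<exists>z. E x z \<and> walk E n z y)"

text \<open>Shortest-path distance; infinity if there is no walk (different components).\<close>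
definition gdist :: "('a \<Rightarrow> 'a \<Rightarrow> bool) \<Rightarrow> 'a \<Rightarrow> 'a \<Rightarrow> enat" where
  "gdist E x y = (INF n\<in>{n. walk E n x y}. enat n)"

definition gdist2 :: "('a \<Rightarrow> 'a \<Rightarrow> bool) \<Rightarrow> 'a \<Rightarrow> 'a \<Rightarrow> enat" where
  "gdist2 E x y = min (gdist E x y) 2"

definition local_resolving ::
  "('a \<Rightarrow> 'a \<Rightarrow> enat) \<Rightarrow> 'a set \<Rightarrow> ('a \<Rightarrow> 'a \<Rightarrow> bool) \<Rightarrow> 'a set \<Rightarrow> bool" where
  "local_resolving d V E S \<longleftrightarrow> S \<subseteq> V \<and>
     (\<forall>x y. E x y \<longrightarrow> (\<exists>s\<in>S. d s x \<noteq> d s y))"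

definition local_metric_basis :: "'a set \<Rightarrow> ('a \<Rightarrow> 'a \<Rightarrow> bool) \<Rightarrow> 'a set \<Rightarrow> bool" where
  "local_metric_basis V E S \<longleftrightarrow> local_resolving (gdist E) V E S \<and>
     (\<forall>T. local_resolving (gdist E) V E T \<longrightarrow> card S \<le> card T)"

definition local_adjacency_basis :: "'a set \<Rightarrow> ('a \<Rightarrow> 'a \<Rightarrow> bool) \<Rightarrow> 'a set \<Rightarrow> bool" where
  "local_adjacency_basis V E S \<longleftrightarrow> local_resolving (gdist2 E) V E S \<and>
     (\<forall>T. local_resolving (gdist2 E) V E T \<longrightarrow> card S \<le> card T)"

definition nbhd :: "('a \<Rightarrow> 'a \<Rightarrow> bool) \<Rightarrow> 'a \<Rightarrow> 'a set" where
  "nbhd E v = {u. E v u}"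

definition classG :: "'a set \<Rightarrow> ('a \<Rightarrow> 'a \<Rightarrow> bool) \<Rightarrow> bool" where
  "classG V E \<longleftrightarrow> (\<forall>B. local_adjacency_basis V E B \<longrightarrow> (\<exists>v\<in>V. B \<subseteq> nbhd E v))"

text \<open>The join K_1 + H: the new vertex is None, vertices of H are Some v.\<close>
definition join_V :: "'a set \<Rightarrow> 'a option set" where
  "join_V V = insert None (Some ` V)"

fun join_E :: "'a set \<Rightarrow> ('a \<Rightarrow> 'a \<Rightarrow> bool) \<Rightarrow> 'a option \<Rightarrow> 'a option \<Rightarrow> bool" where
  "join_E V E None None = False"
| "join_E V E None (Some y) = (y \<in> V)"
| "join_E V E (Some x) None = (x \<in> V)"
| "join_E V E (Some x) (Some y) = E x y"

end

theory Submission
  imports Defs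
begin

text \<open>Every two vertices of \<open>H\<close> are at distance at most 2 in \<open>K\<^sub>1 + H\<close>, so distances between
  vertices of \<open>H\<close> in the join are their truncated distances \<open>d\<^sub>H\<^sub>,\<^sub>2\<close>; the apex is at distance 1
  from everything. Hence a set \<open>S\<close> is locally resolving in the join exactly when its trace on \<open>H\<close>
  is locally adjacency-resolving in \<open>H\<close> and, unless \<open>S\<close> contains the apex, the trace lies in no
  neighbourhood \<open>N\<^sub>H(v)\<close> (which is what distinguishes the edge from the apex to \<open>v\<close>).
  The local metric dimension of the join is therefore the adjacency dimension of \<open>H\<close> plus one,
  attained by an adjacency basis together with the apex, and a basis avoiding the apex exists
  precisely when some adjacency basis lies in no neighbourhood.\<close>

lemma gdist_le_walk: "walk E n x y \<Longrightarrow> gdist E x y \<le> enat n"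
  unfolding gdist_def by (rule INF_lower) simp

lemma enat_le_gdist: "(\<And>n. walk E n x y \<Longrightarrow> m \<le> n) \<Longrightarrow> enat m \<le> gdist E x y"
  unfolding gdist_def by (rule INF_greatest) simp

lemma gdist_self [simp]: "gdist E x x = 0"
  using gdist_le_walk[of E 0 x x] by (simp add: zero_enat_def[symmetric])

lemma gdist_adjacent: assumes "x \<noteq> y" "E x y" shows "gdist E x y = 1"
proof -
  have "gdist E x y \<le> enat 1" by (rule gdist_le_walk) (use assms in simp)
  moreover have "enat 1 \<le> gdist E x y"
  proof (rule enat_le_gdist)
    fix n assume "walk E n x y" thus "1 \<le> n" using assms by (cases n) auto
  qed
  ultimately show ?thesis by (simp add: one_enat_def)
qed

lemma two_le_gdist_nonadjacent: assumes "x \<noteq> y" "\<not> E x y" shows "2 \<le> gdist E x y"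
proof -
  have "enat 2 \<le> gdist E x y"
  proof (rule enat_le_gdist)
    fix n assume w: "walk E n x y"
    show "2 \<le> n"
    proof (cases n)
      case (Suc m) thus ?thesis using w assms by (cases m) auto
    qed (use w assms in simp)
  qed
  thus ?thesis by (simp add: numeral_eq_enat)
qed

lemma gdist2_eq: "gdist2 E x y = (if x = y then 0 else if E x y then 1 else 2)"
  using gdist_adjacent[of x y E] two_le_gdist_nonadjacent[of x y E]
  by (auto simp: gdist2_def min_def)

lemma gdist_join_Some_Some:
  assumes "s \<in> V" "x \<in> V"
  shows "gdist (join_E V E) (Some s) (Some x) = gdist2 E s x"
proof -
  have "gdist (join_E V E) (Some s) (Some x) \<le> enat 2"
    by (rule gdist_le_walk) (use assms in \<open>auto simp: numeral_2_eq_2 intro: exI[of _ None]\<close>)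
  hence "gdist (join_E V E) (Some s) (Some x) = gdist2 (join_E V E) (Some s) (Some x)"
    by (simp add: gdist2_def min_def numeral_eq_enat)
  thus ?thesis by (simp add: gdist2_eq)
qed

lemma gdist_join_None_Some: "y \<in> V \<Longrightarrow> gdist (join_E V E) None (Some y) = 1"
  by (rule gdist_adjacent) auto

lemma gdist_join_Some_None: "y \<in> V \<Longrightarrow> gdist (join_E V E) (Some y) None = 1"
  by (rule gdist_adjacent) auto

lemma join_distinguishes_apex_iff:
  assumes "graph V E" "z \<in> V" "y \<in> V"
  shows "gdist (join_E V E) (Some z) None \<noteq> gdist (join_E V E) (Some z) (Some y)
    \<longleftrightarrow> z \<notin> nbhd E y"
  using assms by (auto simp: gdist_join_Some_None gdist_join_Some_Some gdist2_eq nbhd_def graph_def)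

lemma subset_join_V_iff: "S \<subseteq> join_V V \<longleftrightarrow> Some -` S \<subseteq> V"
proof
  assume "Some -` S \<subseteq> V"
  show "S \<subseteq> join_V V"
  proof
    fix x assume "x \<in> S"
    thus "x \<in> join_V V" using \<open>Some -` S \<subseteq> V\<close> by (cases x) (auto simp: join_V_def)
  qed
qed (auto simp: join_V_def)

lemma local_resolving_trace_if_join:
  assumes "graph V E" and J: "local_resolving (gdist (join_E V E)) (join_V V) (join_E V E) S"
  shows "local_resolving (gdist2 E) V E (Some -` S)"
proof -
  have trace_V: "Some -` S \<subseteq> V"
    using J by (simp add: local_resolving_def subset_join_V_iff)
  have "\<exists>z\<in>Some -` S. gdist2 E z x \<noteq> gdist2 E z y" if xy: "E x y" for x y
  proof -
    have V: "x \<in> V" "y \<in> V" using xy assms(1) by (auto simp: graph_def)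
    from xy have "join_E V E (Some x) (Some y)" by simp
    with J obtain s where s: "s \<in> S"
      "gdist (join_E V E) s (Some x) \<noteq> gdist (join_E V E) s (Some y)"
      unfolding local_resolving_def by blast
    then obtain z where z: "s = Some z"
      using V by (cases s) (auto simp: gdist_join_None_Some)
    with s trace_V have "z \<in> V" by auto
    with s z V have "gdist2 E z x \<noteq> gdist2 E z y" by (simp add: gdist_join_Some_Some)
    with s z show ?thesis by auto
  qed
  with trace_V show ?thesis by (simp add: local_resolving_def)
qed

lemma trace_not_in_nbhd_if_local_resolving_join:
  assumes "graph V E" and J: "local_resolving (gdist (join_E V E)) (join_V V) (join_E V E) S"
    and "None \<notin> S" "v \<in> V"
  shows "\<not> Some -` S \<subseteq> nbhd E v"
proof -
  from \<open>v \<in> V\<close> have "join_E V E None (Some v)" by simp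
  with J obtain s where s: "s \<in> S"
    "gdist (join_E V E) s None \<noteq> gdist (join_E V E) s (Some v)"
    unfolding local_resolving_def by blast
  with \<open>None \<notin> S\<close> obtain z where z: "s = Some z" by (cases s) auto
  moreover have "Some -` S \<subseteq> V"
    using J by (simp add: local_resolving_def subset_join_V_iff)
  ultimately have "z \<in> V" using s by auto
  with s z assms(1,4) have "z \<notin> nbhd E v" by (simp add: join_distinguishes_apex_iff)
  with s z show ?thesis by auto
qed

lemma local_resolving_join_if_trace:
  assumes "graph V E" and trace: "local_resolving (gdist2 E) V E (Some -` S)"
    and apex: "None \<in> S \<or> (\<forall>v\<in>V. \<not> Some -` S \<subseteq> nbhd E v)"
  shows "local_resolving (gdist (join_E V E)) (join_V V) (join_E V E) S"
proof -
  let ?d = "gdist (join_E V E)"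
  have trace_V: "Some -` S \<subseteq> V" using trace by (simp add: local_resolving_def)
  have apex_edge: "\<exists>s\<in>S. ?d s None \<noteq> ?d s (Some v)" if v: "v \<in> V" for v
  proof (cases "None \<in> S")
    case True
    with v show ?thesis by (intro bexI[of _ None]) (auto simp: gdist_join_None_Some)
  next
    case False
    with apex v obtain z where z: "Some z \<in> S" "z \<notin> nbhd E v" by blast
    with trace_V have "z \<in> V" by auto
    with z assms(1) v show ?thesis
      by (intro bexI[of _ "Some z"]) (simp_all add: join_distinguishes_apex_iff)
  qed
  have "\<exists>s\<in>S. ?d s x \<noteq> ?d s y" if xy: "join_E V E x y" for x y
  proof (cases x; cases y)
    fix x' y' assume x: "x = Some x'" and y: "y = Some y'"
    with xy have "E x' y'" by simp
    hence V: "x' \<in> V" "y' \<in> V" using assms(1) by (auto simp: graph_def)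
    from \<open>E x' y'\<close> trace obtain z where z: "z \<in> Some -` S" "gdist2 E z x' \<noteq> gdist2 E z y'"
      unfolding local_resolving_def by blast
    with trace_V have "z \<in> V" by auto
    with z x y V show ?thesis
      by (intro bexI[of _ "Some z"]) (simp_all add: gdist_join_Some_Some)
  next
    fix x' assume "x = Some x'" "y = None"
    with xy apex_edge[of x'] show ?thesis by (auto simp: eq_commute)
  qed (use xy apex_edge in auto)
  with trace_V show ?thesis by (simp add: local_resolving_def subset_join_V_iff)
qed

lemma local_resolving_join_iff:
  assumes "graph V E"
  shows "local_resolving (gdist (join_E V E)) (join_V V) (join_E V E) S \<longleftrightarrow>
    local_resolving (gdist2 E) V E (Some -` S) \<and>
    (None \<in> S \<or> (\<forall>v\<in>V. \<not> Some -` S \<subseteq> nbhd E v))"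
  using local_resolving_trace_if_join trace_not_in_nbhd_if_local_resolving_join
    local_resolving_join_if_trace assms by metis

lemma card_eq_card_vimage_Some:
  assumes "finite T"
  shows "card T = card (Some -` T) + (if None \<in> T then 1 else 0)"
proof -
  have "T - {None} = Some ` (Some -` T)"
    by (auto simp: image_iff)
  hence "card (T - {None}) = card (Some -` T)"
    by (metis card_image option.inject inj_onI)
  moreover have "None \<in> T \<Longrightarrow> 0 < card T"
    using assms card_gt_0_iff by blast
  ultimately show ?thesis
    using assms by (cases "None \<in> T") (auto simp: card_Diff_singleton)
qed

lemma ex_local_adjacency_basis:
  assumes "graph V E"
  shows "\<exists>B. local_adjacency_basis V E B"
proof -
  let ?res = "local_resolving (gdist2 E) V E"
  have "?res V"
    using assms by (auto simp: local_resolving_def graph_def gdist2_eq)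
  then obtain B where "?res B" and "\<And>T. ?res T \<Longrightarrow> card B \<le> card T"
    using ex_has_least_nat[of ?res V card] by blast
  thus ?thesis by (auto simp: local_adjacency_basis_def)
qed

lemma finite_if_local_resolving_join:
  "graph V E \<Longrightarrow> local_resolving d (join_V V) E' T \<Longrightarrow> finite T"
  by (auto simp: local_resolving_def graph_def join_V_def intro: finite_subset)

lemma card_local_resolving_join_ge:
  assumes "graph V E" "local_adjacency_basis V E B"
    and T: "local_resolving (gdist (join_E V E)) (join_V V) (join_E V E) T"
  shows "card B + (if None \<in> T then 1 else 0) \<le> card T"
proof -
  have "finite T" using finite_if_local_resolving_join[OF assms(1) T] .
  moreover have "card B \<le> card (Some -` T)"
    using assms local_resolving_join_iff[OF assms(1)] by (auto simp: local_adjacency_basis_def)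
  ultimately show ?thesis by (simp add: card_eq_card_vimage_Some[of T])
qed

lemma classG_if_local_metric_basis_join_apex:
  assumes "graph V E" "local_metric_basis (join_V V) (join_E V E) S" "None \<in> S"
  shows "classG V E"
  unfolding classG_def
proof (intro allI impI)
  fix B assume B: "local_adjacency_basis V E B"
  show "\<exists>v\<in>V. B \<subseteq> nbhd E v"
  proof (rule ccontr)
    assume "\<not> (\<exists>v\<in>V. B \<subseteq> nbhd E v)"
    moreover have "Some -` Some ` B = B" by auto
    ultimately have "local_resolving (gdist (join_E V E)) (join_V V) (join_E V E) (Some ` B)"
      using B local_resolving_join_iff[OF assms(1)] by (auto simp: local_adjacency_basis_def)
    hence "card S \<le> card B"
      using assms(2) by (auto simp: local_metric_basis_def card_image)
    moreover have "card B + 1 \<le> card S"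
      using card_local_resolving_join_ge[OF assms(1) B] assms(2,3)
      by (force simp: local_metric_basis_def)
    ultimately show False by simp
  qed
qed

lemma local_metric_basis_join_apex:
  assumes "graph V E" "classG V E" and B: "local_adjacency_basis V E B"
  shows "local_metric_basis (join_V V) (join_E V E) (insert None (Some ` B))"
proof -
  let ?res = "local_resolving (gdist (join_E V E)) (join_V V) (join_E V E)"
  have B_res: "local_resolving (gdist2 E) V E B"
    using B by (simp add: local_adjacency_basis_def)
  have B_min: "card B \<le> card T" if "local_resolving (gdist2 E) V E T" for T
    using B that by (simp add: local_adjacency_basis_def)
  have "finite B"
    using B_res assms(1) by (auto simp: local_resolving_def graph_def intro: finite_subset)
  hence card_apex: "card (insert None (Some ` B)) = card B + 1"
    by (simp add: card_image)
  have "Some -` insert None (Some ` B) = B" by auto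
  hence "?res (insert None (Some ` B))"
    using B_res local_resolving_join_iff[OF assms(1)] by simp
  moreover have "card B + 1 \<le> card T" if T: "?res T" for T
  proof (cases "None \<in> T")
    case True
    thus ?thesis using card_local_resolving_join_ge[OF assms(1) B T] by simp
  next
    case False
    hence trace: "local_resolving (gdist2 E) V E (Some -` T)"
      and spread: "\<forall>v\<in>V. \<not> Some -` T \<subseteq> nbhd E v"
      using T local_resolving_join_iff[OF assms(1)] by auto
    have "card (Some -` T) \<noteq> card B"
    proof
      assume "card (Some -` T) = card B"
      hence "local_adjacency_basis V E (Some -` T)"
        using trace B_min by (auto simp: local_adjacency_basis_def)
      thus False using assms(2) spread by (auto simp: classG_def)
    qed
    moreover have "card B \<le> card (Some -` T)" using trace B_min by blast
    moreover have "card T = card (Some -` T)"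
      using card_eq_card_vimage_Some[OF finite_if_local_resolving_join[OF assms(1) T]] False
      by simp
    ultimately show ?thesis by simp
  qed
  ultimately show ?thesis
    using card_apex by (simp add: local_metric_basis_def)
qed

theorem proposition1:
  fixes V :: "'a set" and E :: "'a \<Rightarrow> 'a \<Rightarrow> bool"
  assumes "graph V E"
  shows "(\<exists>S. local_metric_basis (join_V V) (join_E V E) S \<and> None \<in> S) \<longleftrightarrow> classG V E"
proof
  assume "\<exists>S. local_metric_basis (join_V V) (join_E V E) S \<and> None \<in> S"
  thus "classG V E" using classG_if_local_metric_basis_join_apex[OF assms] by blast
next
  assume "classG V E"
  moreover obtain B where "local_adjacency_basis V E B"
    using ex_local_adjacency_basis[OF assms] by blast
  ultimately show "\<exists>S. local_metric_basis (join_V V) (join_E V E) S \<and> None \<in> S"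
    using local_metric_basis_join_apex[OF assms] by blast
qed

end
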